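(* Let $A\in\mathbb{R}^{n\times n}$ be symmetric, let $W_k\in\mathbb{R}^{n\times m}$ satisfy $W_k^TW_k=I_m$, and let $v_{k-1},v_k\in\mathbb{R}^{n\times p}$ and $\alpha_k,\beta_k\in\mathbb{R}^{p\times p}$ be given. Define $q_{k+j},\beta_{k+j}$, $j\ge1$, by the continuation process \[ \begin{aligned} \tilde q_{k+1}&=Av_k-v_k\alpha_k-v_{k-1}\beta_k^T, & q_{k+1}\beta_{k+1}&=(I_n-P_1)\tilde q_{k+1},\\ \tilde q_{k+2}&=Aq_{k+1}-v_k\beta_{k+1}^T, & q_{k+2}\beta_{k+2}&=(I_n-P_2)\tilde q_{k+2},\\ \tilde q_{k+j}&=Aq_{k+j-1}-q_{k+j-2}\beta_{k+j-1}^T, & q_{k+j}\beta_{k+j}&=(I_n-P_j)\tilde q_{k+j},\quad j\ge3, \end{aligned} \] where $P_1=W_kW_k^T$, $P_2=P_1+q_{k+1}q_{k+1}^T$, $P_j=P_2+q_{k+j-1}q_{k+j-1}^T$ for $j\ge3$, and the columns of $q_{k+j}$ form an orthonormal basis of the column space of $(I_n-P_j)\tilde q_{k+j}$, with $\beta_{k+j}$ of full row rank. Then the process can be written as \[ \begin{aligned} q_{k+1}\beta_{k+1}&=Av_k-v_k\alpha_k-v_{k-1}\beta_k^T-h_k,\\ q_{k+2}\beta_{k+2}&=Aq_{k+1}-q_{k+1}\alpha_{k+1}-v_k\beta_{k+1}^T-h_{k+1},\\ q_{k+j}\beta_{k+j}&=Aq_{k+j-1}-q_{k+j-1}\alpha_{k+j-1}-q_{k+j-2}\beta_{k+j-1}^T-h_{k+j-1},\quad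 j\ge3, \end{aligned} \] where \[ \alpha_{k+1}=q_{k+1}^T(Aq_{k+1}-v_k\beta_{k+1}^T),\qquad \alpha_{k+j-1}=q_{k+j-1}^TAq_{k+j-1}\ (j\ge3), \] and \[ \begin{aligned} h_k&=P_1\left(Av_k-v_k\alpha_k-v_{k-1}\beta_k^T\right),\\ h_{k+1}&=P_1\left(Aq_{k+1}-v_k\beta_{k+1}^T\right),\\ h_{k+j-1}&=P_1Aq_{k+j-1}+q_{k+1}\beta_{k+1}v_k^Tq_{k+j-1},\quad j\ge3. \end{aligned} \]
   Context: In cases of rank deficiency the number of columns of $q_{k+j}$ is reduced accordingly and $\beta_{k+j}$ becomes rectangular with full row rank. *)

theory Defs
  imports "Jordan_Normal_Form.DL_Rank"
begin

abbreviation colspace :: "nat \<Rightarrow> real mat \<Rightarrow> real vec set" where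
  "colspace n B \<equiv> vec_space.col_space n B"

abbreviation mrank :: "real mat \<Rightarrow> nat" where
  "mrank B \<equiv> vec_space.rank (dim_row B) B"

end

theory Submission
  imports Defs
begin

(* Index j stands for k + j, as in the statement. The process is a block Lanczos recurrence that
   reorthogonalises q j only against W, q 1 and q (j - 1); nevertheless W, q 1, q 2, ... are mutually
   orthogonal. This is shown by induction on j: q j lies in the column space of (I - P j) qt j, which
   annihilates W, q 1 and q (j - 1), and for 2 <= i <= j - 2 the symmetry of A together with
   A q i = q (i + 1) beta (i + 1) + P (i + 1) qt (i + 1) + q (i - 1) (beta i)^T gives (q i)^T qt j = 0.
   Once orthogonality is known, expanding P j qt j produces the coefficients alpha and the correction
   terms h; the term q 1 beta 1 vk^T q (j - 1) survives because vk is not orthogonal to the later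
   blocks, which is why q 1 stays in every projector. *)

lemma col_space_subset_imp_factor:
  fixes Q M :: "'a::field mat"
  assumes Q: "Q \<in> carrier_mat n r" and M: "M \<in> carrier_mat n c"
    and sub: "vec_space.col_space n Q \<subseteq> vec_space.col_space n M"
  obtains C where "C \<in> carrier_mat c r" and "Q = M * C"
proof -
  have "\<exists>x \<in> carrier_vec c. M *\<^sub>v x = col Q k" if k: "k < r" for k
  proof -
    have "col Q k = Q *\<^sub>v unit_vec r k"
      using Q k by (intro eq_vecI) (auto simp: scalar_prod_right_unit)
    hence "col Q k \<in> vec_space.col_space n Q"
      using Q k by (auto simp: vec_space.col_space_eq[OF Q])
    thus ?thesis using sub M by (auto simp: vec_space.col_space_eq[OF M])
  qed
  then obtain x where x: "\<And>k. k < r \<Longrightarrow> x k \<in> carrier_vec c \<and> M *\<^sub>v x k = col Q k"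
    by metis
  define C where "C = mat c r (\<lambda>(i, k). x k $ i)"
  have C: "C \<in> carrier_mat c r" by (simp add: C_def)
  have "Q = M * C"
  proof (rule eq_matI)
    fix i k assume "i < dim_row (M * C)" "k < dim_col (M * C)"
    hence i: "i < n" and k: "k < r" using M by (auto simp: C_def)
    have "col C k = x k" using x[OF k] k by (auto simp: C_def)
    hence "(M * C) $$ (i, k) = (M *\<^sub>v x k) $ i" using i k M by (auto simp: C_def)
    thus "Q $$ (i, k) = (M * C) $$ (i, k)" using x[OF k] i k Q by auto
  qed (use Q M in \<open>auto simp: C_def\<close>)
  with C show thesis by (rule that)
qed

lemma minus_zero_mat [simp]:
  "(A :: 'a::group_add mat) \<in> carrier_mat nr nc \<Longrightarrow> A - 0\<^sub>m nr nc = A"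
  by (intro eq_matI) auto

lemma eq_add_of_minus_eq:
  fixes X Y Z :: "'a::ab_group_add mat"
  assumes "Y \<in> carrier_mat nr nc" "Z \<in> carrier_mat nr nc" "X = Y - Z"
  shows "Y = X + Z"
  using assms by (intro eq_matI) auto

lemma mult_assoc_eq_zero:
  fixes X Y Z :: "'a::semiring_0 mat"
  assumes "X \<in> carrier_mat a b" "Y \<in> carrier_mat b c" "Z \<in> carrier_mat c d"
    and "X * Y = 0\<^sub>m a c"
  shows "X * (Y * Z) = 0\<^sub>m a d"
  using assoc_mult_mat[OF assms(1-3)] assms by simp

lemma transpose_mult_eq_zero_swap:
  fixes X Y :: "'a::comm_semiring_0 mat"
  assumes "X \<in> carrier_mat n a" "Y \<in> carrier_mat n b" "X\<^sup>T * Y = 0\<^sub>m a b"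
  shows "Y\<^sup>T * X = 0\<^sub>m b a"
  using assms transpose_mult[of "X\<^sup>T" a n Y b] by simp

lemma transpose_mult_complement:
  fixes Y P Q :: "'a::comm_ring_1 mat"
  assumes Y: "Y \<in> carrier_mat n a" and P: "P \<in> carrier_mat n n" and Q: "Q \<in> carrier_mat n c"
  shows "Y\<^sup>T * ((1\<^sub>m n - P) * Q) = Y\<^sup>T * Q - (Y\<^sup>T * P) * Q"
proof -
  have "Y\<^sup>T * ((1\<^sub>m n - P) * Q) = Y\<^sup>T * (Q - P * Q)"
    using minus_mult_distrib_mat[OF one_carrier_mat P Q] Q by simp
  also have "\<dots> = Y\<^sup>T * Q - (Y\<^sup>T * P) * Q"
    using Y P Q by (simp add: mult_minus_distrib_mat assoc_mult_mat)
  finally show ?thesis .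
qed

lemma transpose_mult_complement_eq_zero:
  fixes Y P Q :: "'a::comm_ring_1 mat"
  assumes "Y \<in> carrier_mat n a" "P \<in> carrier_mat n n" "Q \<in> carrier_mat n c" "Y\<^sup>T * P = Y\<^sup>T"
  shows "Y\<^sup>T * ((1\<^sub>m n - P) * Q) = 0\<^sub>m a c"
  using assms by (simp add: transpose_mult_complement)

lemma transpose_mult_complement_eq:
  fixes Y P Q :: "'a::comm_ring_1 mat"
  assumes "Y \<in> carrier_mat n a" "P \<in> carrier_mat n n" "Q \<in> carrier_mat n c" "Y\<^sup>T * P = 0\<^sub>m a n"
  shows "Y\<^sup>T * ((1\<^sub>m n - P) * Q) = Y\<^sup>T * Q"
  using assms by (simp add: transpose_mult_complement)

lemma transpose_mult_add_outer:
  fixes Y P X :: "'a::comm_semiring_0 mat"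
  assumes "Y \<in> carrier_mat n a" "P \<in> carrier_mat n n" "X \<in> carrier_mat n b"
  shows "Y\<^sup>T * (P + X * X\<^sup>T) = Y\<^sup>T * P + (Y\<^sup>T * X) * X\<^sup>T"
  using assms by (simp add: mult_add_distrib_mat assoc_mult_mat)

(* The hypotheses of theorem4 without the full row rank of beta j, which the argument never uses. *)
locale block_lanczos_continuation =
  fixes A W vk vkm1 ak bk :: "real mat"
    and n m p :: nat
    and q qt beta P :: "nat \<Rightarrow> real mat"
    and r :: "nat \<Rightarrow> nat"
  assumes A: "A \<in> carrier_mat n n" and A_sym: "A\<^sup>T = A"
    and W: "W \<in> carrier_mat n m" and W_orth: "W\<^sup>T * W = 1\<^sub>m m"
    and vk: "vk \<in> carrier_mat n p" and vkm1: "vkm1 \<in> carrier_mat n p"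
    and ak: "ak \<in> carrier_mat p p" and bk: "bk \<in> carrier_mat p p"
    and q_dim: "\<And>j. j \<ge> 1 \<Longrightarrow> q j \<in> carrier_mat n (r j)"
    and beta1_dim: "beta 1 \<in> carrier_mat (r 1) p"
    and beta_dim: "\<And>j. j \<ge> 2 \<Longrightarrow> beta j \<in> carrier_mat (r j) (r (j - 1))"
    and qt1: "qt 1 = A * vk - vk * ak - vkm1 * bk\<^sup>T"
    and qt2: "qt 2 = A * q 1 - vk * (beta 1)\<^sup>T"
    and qtj: "\<And>j. j \<ge> 3 \<Longrightarrow> qt j = A * q (j - 1) - q (j - 2) * (beta (j - 1))\<^sup>T"
    and P1: "P 1 = W * W\<^sup>T"
    and P2: "P 2 = P 1 + q 1 * (q 1)\<^sup>T"
    and Pj: "\<And>j. j \<ge> 3 \<Longrightarrow> P j = P 2 + q (j - 1) * (q (j - 1))\<^sup>T"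
    and step: "\<And>j. j \<ge> 1 \<Longrightarrow> q j * beta j = (1\<^sub>m n - P j) * qt j"
    and q_orthonormal: "\<And>j. j \<ge> 1 \<Longrightarrow> (q j)\<^sup>T * q j = 1\<^sub>m (r j)"
    and q_span: "\<And>j. j \<ge> 1 \<Longrightarrow> colspace n (q j) = colspace n ((1\<^sub>m n - P j) * qt j)"
begin

lemma qt1_carrier: "qt 1 \<in> carrier_mat n p"
  unfolding qt1 using A vk vkm1 ak bk by auto

lemma qt_carrier:
  assumes "j \<ge> 2" shows "qt j \<in> carrier_mat n (r (j - 1))"
proof (cases "j = 2")
  case True
  have "qt 2 \<in> carrier_mat n (r 1)" unfolding qt2 using A vk q_dim[of 1] beta1_dim by auto
  with True show ?thesis by simp
next
  case False
  with assms have j: "j \<ge> 3" by simp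
  have "beta (j - 1) \<in> carrier_mat (r (j - 1)) (r (j - 2))"
    using beta_dim[of "j - 1"] j by (simp add: numeral_2_eq_2)
  moreover have "q (j - 1) \<in> carrier_mat n (r (j - 1))" "q (j - 2) \<in> carrier_mat n (r (j - 2))"
    using q_dim j by auto
  ultimately show ?thesis unfolding qtj[OF j] using A by auto
qed

lemma P1_carrier: "P 1 \<in> carrier_mat n n"
  unfolding P1 using W by auto

lemma P2_carrier: "P 2 \<in> carrier_mat n n"
  unfolding P2 using P1_carrier q_dim[of 1] by auto

lemma P_carrier:
  assumes "j \<ge> 1" shows "P j \<in> carrier_mat n n"
proof -
  consider "j = 1" | "j = 2" | "j \<ge> 3" using assms by linarith
  thus ?thesis
  proof cases
    case 3
    have "q (j - 1) \<in> carrier_mat n (r (j - 1))" using q_dim 3 by simp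
    thus ?thesis unfolding Pj[OF 3] using P2_carrier by auto
  qed (use P1_carrier P2_carrier in auto)
qed

lemma q_mult_beta_eq: "j \<ge> 1 \<Longrightarrow> q j * beta j = qt j - P j * qt j"
  using step[of j] P_carrier[of j] qt1_carrier qt_carrier[of j]
    minus_mult_distrib_mat[OF one_carrier_mat P_carrier[of j], of "qt j"]
  by (cases "j = 1") auto

lemma qt_carrier_dim_col: "j \<ge> 1 \<Longrightarrow> qt j \<in> carrier_mat n (dim_col (qt j))"
  using qt1_carrier qt_carrier[of j] by (cases "j = 1") auto

lemma beta_carrier_dim_col_qt: "j \<ge> 1 \<Longrightarrow> beta j \<in> carrier_mat (r j) (dim_col (qt j))"
  using beta1_dim beta_dim[of j] qt1_carrier qt_carrier[of j] by (cases "j = 1") auto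

lemma qt_decompose:
  assumes "j \<ge> 1" shows "qt j = q j * beta j + P j * qt j"
  using eq_add_of_minus_eq[OF qt_carrier_dim_col[OF assms] _ q_mult_beta_eq[OF assms]]
    mult_carrier_mat[OF P_carrier[OF assms] qt_carrier_dim_col[OF assms]] by blast

lemma A_mult_q1: "A * q 1 = qt 2 + vk * (beta 1)\<^sup>T"
  by (rule eq_add_of_minus_eq[OF _ _ qt2]) (use A q_dim[of 1] vk beta1_dim in auto)

lemma A_mult_q:
  assumes "i \<ge> 2" shows "A * q i = qt (i + 1) + q (i - 1) * (beta i)\<^sup>T"
proof (rule eq_add_of_minus_eq)
  show "A * q i \<in> carrier_mat n (r i)" using A q_dim assms by auto
  have "q (i - 1) \<in> carrier_mat n (r (i - 1))" "beta i \<in> carrier_mat (r i) (r (i - 1))"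
    using q_dim beta_dim assms by auto
  thus "q (i - 1) * (beta i)\<^sup>T \<in> carrier_mat n (r i)" by auto
  show "qt (i + 1) = A * q i - q (i - 1) * (beta i)\<^sup>T" using qtj[of "i + 1"] assms by simp
qed

lemma transpose_q_mult_A: "i \<ge> 1 \<Longrightarrow> (q i)\<^sup>T * A = (A * q i)\<^sup>T"
  using transpose_mult[OF A q_dim[of i]] A_sym by simp

lemma W_transpose_mult_P1: "W\<^sup>T * P 1 = W\<^sup>T"
proof -
  have "W\<^sup>T * P 1 = (W\<^sup>T * W) * W\<^sup>T" unfolding P1 using W by simp
  also have "\<dots> = W\<^sup>T" using W_orth W by simp
  finally show ?thesis .
qed

definition orthogonal_below :: "nat \<Rightarrow> bool" where
  "orthogonal_below N \<longleftrightarrow> (\<forall>l. 1 \<le> l \<longrightarrow> l < N \<longrightarrow>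
     W\<^sup>T * q l = 0\<^sub>m m (r l) \<and> (\<forall>i. 1 \<le> i \<longrightarrow> i < l \<longrightarrow> (q i)\<^sup>T * q l = 0\<^sub>m (r i) (r l)))"

lemma W_transpose_mult_q_below:
  "orthogonal_below N \<Longrightarrow> 1 \<le> l \<Longrightarrow> l < N \<Longrightarrow> W\<^sup>T * q l = 0\<^sub>m m (r l)"
  unfolding orthogonal_below_def by blast

lemma transpose_q_mult_q_below:
  assumes orth: "orthogonal_below N" and i: "1 \<le> i" "i < N" and l: "1 \<le> l" "l < N"
  shows "(q i)\<^sup>T * q l = (if i = l then 1\<^sub>m (r i) else 0\<^sub>m (r i) (r l))"
proof -
  consider "i = l" | "i < l" | "l < i" by linarith
  thus ?thesis
  proof cases
    case 3
    have "(q l)\<^sup>T * q i = 0\<^sub>m (r l) (r i)" using orth i l 3 unfolding orthogonal_below_def by blast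
    thus ?thesis using transpose_mult_eq_zero_swap[OF q_dim[OF l(1)] q_dim[OF i(1)]] 3 by simp
  qed (use orth i l q_orthonormal in \<open>auto simp: orthogonal_below_def\<close>)
qed

lemma transpose_q_mult_P1:
  assumes orth: "orthogonal_below N" and i: "1 \<le> i" "i < N"
  shows "(q i)\<^sup>T * P 1 = 0\<^sub>m (r i) n"
proof -
  have "(q i)\<^sup>T * W = 0\<^sub>m (r i) m"
    by (rule transpose_mult_eq_zero_swap[OF W q_dim[OF i(1)] W_transpose_mult_q_below[OF orth i]])
  moreover have "(q i)\<^sup>T * (W * W\<^sup>T) = ((q i)\<^sup>T * W) * W\<^sup>T"
    using W q_dim[OF i(1)] by (intro assoc_mult_mat[symmetric]) auto
  ultimately show ?thesis unfolding P1 using W by simp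
qed

lemma transpose_q_mult_P:
  assumes orth: "orthogonal_below N" and i: "1 \<le> i" "i < N" and j: "1 \<le> j" "j \<le> N"
  shows "(q i)\<^sup>T * P j = (if i < j \<and> (i = 1 \<or> i = j - 1) then (q i)\<^sup>T else 0\<^sub>m (r i) n)"
proof -
  have qi: "q i \<in> carrier_mat n (r i)" using q_dim i by simp
  have P2: "(q i)\<^sup>T * P 2 = (if i = 1 then (q i)\<^sup>T else 0\<^sub>m (r i) n)" if "2 \<le> N"
    using transpose_mult_add_outer[OF qi P1_carrier q_dim[of 1]] transpose_q_mult_P1[OF orth i]
      transpose_q_mult_q_below[OF orth i, of 1] qi q_dim[of 1] that unfolding P2 by auto
  consider "j = 1" | "j = 2" | "j \<ge> 3" using j by linarith
  thus ?thesis
  proof cases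
    case 3
    have qj: "q (j - 1) \<in> carrier_mat n (r (j - 1))" using q_dim 3 by simp
    have "(q i)\<^sup>T * P j = (q i)\<^sup>T * P 2 + (q i)\<^sup>T * q (j - 1) * (q (j - 1))\<^sup>T"
      unfolding Pj[OF 3] by (rule transpose_mult_add_outer[OF qi P2_carrier qj])
    thus ?thesis using P2 transpose_q_mult_q_below[OF orth i, of "j - 1"] qi qj 3 j by auto
  qed (use P2 transpose_q_mult_P1[OF orth i] i j in auto)
qed

lemma W_transpose_mult_P:
  assumes orth: "orthogonal_below N" and j: "1 \<le> j" "j \<le> N"
  shows "W\<^sup>T * P j = W\<^sup>T"
proof -
  have q1: "q 1 \<in> carrier_mat n (r 1)" using q_dim by simp
  have P2: "W\<^sup>T * P 2 = W\<^sup>T" if "2 \<le> N"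
    using transpose_mult_add_outer[OF W P1_carrier q1] W_transpose_mult_P1
      W_transpose_mult_q_below[OF orth, of 1] W q1 that unfolding P2 by auto
  consider "j = 1" | "j = 2" | "j \<ge> 3" using j by linarith
  thus ?thesis
  proof cases
    case 3
    have qj: "q (j - 1) \<in> carrier_mat n (r (j - 1))" using q_dim 3 by simp
    have "W\<^sup>T * P j = W\<^sup>T * P 2 + W\<^sup>T * q (j - 1) * (q (j - 1))\<^sup>T"
      unfolding Pj[OF 3] by (rule transpose_mult_add_outer[OF W P2_carrier qj])
    thus ?thesis using P2 W_transpose_mult_q_below[OF orth, of "j - 1"] W qj 3 j by auto
  qed (use P2 W_transpose_mult_P1 j in auto)
qed

lemma transpose_q_mult_qt:
  assumes orth: "orthogonal_below N" and j: "1 \<le> j" "j \<le> l" and l: "l < N"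
  shows "(q l)\<^sup>T * qt j = (q l)\<^sup>T * q j * beta j"
proof -
  have qlT: "(q l)\<^sup>T \<in> carrier_mat (r l) n" using q_dim j by simp
  note qj = q_dim[OF j(1)] and bj = beta_carrier_dim_col_qt[OF j(1)]
    and qt = qt_carrier_dim_col[OF j(1)] and Pj = P_carrier[OF j(1)]
  have "(q l)\<^sup>T * qt j = (q l)\<^sup>T * (q j * beta j + P j * qt j)"
    using qt_decompose[OF j(1)] by (rule arg_cong)
  also have "\<dots> = (q l)\<^sup>T * (q j * beta j) + (q l)\<^sup>T * (P j * qt j)"
    by (rule mult_add_distrib_mat[OF qlT mult_carrier_mat[OF qj bj] mult_carrier_mat[OF Pj qt]])
  also have "(q l)\<^sup>T * (P j * qt j) = 0\<^sub>m (r l) (dim_col (qt j))"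
    by (rule mult_assoc_eq_zero[OF qlT Pj qt])
      (use transpose_q_mult_P[OF orth _ l j(1)] j l in simp)
  finally show ?thesis using qlT qj bj by simp
qed

lemma transpose_q_mult_A_q:
  assumes orth: "orthogonal_below N" and i: "2 \<le> i" "i < l" and l: "l < N"
  shows "(q l)\<^sup>T * (A * q i) = (q l)\<^sup>T * q (i + 1) * beta (i + 1)"
proof -
  have qlT: "(q l)\<^sup>T \<in> carrier_mat (r l) n" using q_dim i by simp
  have qi: "q (i - 1) \<in> carrier_mat n (r (i - 1))" using q_dim i by simp
  have bi: "(beta i)\<^sup>T \<in> carrier_mat (r (i - 1)) (r i)" using beta_dim i by simp
  have qt: "qt (i + 1) \<in> carrier_mat n (r i)" using qt_carrier[of "i + 1"] i by simp
  have "(q l)\<^sup>T * (A * q i) = (q l)\<^sup>T * (qt (i + 1) + q (i - 1) * (beta i)\<^sup>T)"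
    using A_mult_q[OF i(1)] by simp
  also have "\<dots> = (q l)\<^sup>T * qt (i + 1) + (q l)\<^sup>T * (q (i - 1) * (beta i)\<^sup>T)"
    by (rule mult_add_distrib_mat[OF qlT qt mult_carrier_mat[OF qi bi]])
  also have "(q l)\<^sup>T * (q (i - 1) * (beta i)\<^sup>T) = 0\<^sub>m (r l) (r i)"
    by (rule mult_assoc_eq_zero[OF qlT qi bi])
      (use transpose_q_mult_q_below[OF orth, of l "i - 1"] i l in auto)
  also have "(q l)\<^sup>T * qt (i + 1) = (q l)\<^sup>T * q (i + 1) * beta (i + 1)"
    by (rule transpose_q_mult_qt[OF orth _ _ l]) (use i in auto)
  finally show ?thesis using qlT q_dim[of "i + 1"] beta_dim[of "i + 1"] i by simp
qed

lemma transpose_q_mult_qt_eq_zero: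
  assumes orth: "orthogonal_below N" and i: "2 \<le> i" "i + 2 \<le> j" and j: "j \<le> N"
  shows "(q i)\<^sup>T * qt j = 0\<^sub>m (r i) (r (j - 1))"
proof -
  define l where "l = j - 1"
  have jl: "j = l + 1" "j - 2 = l - 1" using i unfolding l_def by auto
  have qiT: "(q i)\<^sup>T \<in> carrier_mat (r i) n" using q_dim i by simp
  have ql: "q l \<in> carrier_mat n (r l)" and ql': "q (l - 1) \<in> carrier_mat n (r (l - 1))"
    using q_dim i jl by auto
  have bl: "(beta l)\<^sup>T \<in> carrier_mat (r (l - 1)) (r l)" using beta_dim i jl by simp
  have bi: "beta (i + 1) \<in> carrier_mat (r (i + 1)) (r i)" using beta_dim[of "i + 1"] i by simp
  have "(q i)\<^sup>T * (A * q l) = ((q i)\<^sup>T * A) * q l"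
    using qiT A ql by (intro assoc_mult_mat[symmetric]) auto
  also have "\<dots> = ((q l)\<^sup>T * (A * q i))\<^sup>T"
    using transpose_q_mult_A[of i] transpose_mult[of "(q l)\<^sup>T" "r l" n "A * q i" "r i"]
      A ql q_dim[of i] i by simp
  also have "\<dots> = ((q l)\<^sup>T * q (i + 1) * beta (i + 1))\<^sup>T"
    using transpose_q_mult_A_q[OF orth i(1)] i j jl by simp
  finally have "(q i)\<^sup>T * qt j = ((q l)\<^sup>T * q (i + 1) * beta (i + 1))\<^sup>T - (q i)\<^sup>T * q (l - 1) * (beta l)\<^sup>T"
    using qtj[of j] mult_minus_distrib_mat[OF qiT mult_carrier_mat[OF A ql] mult_carrier_mat[OF ql' bl]]
      qiT ql' bl i jl by simp
  moreover have "(q l)\<^sup>T * q (i + 1) = (if l = i + 1 then 1\<^sub>m (r l) else 0\<^sub>m (r l) (r (i + 1)))"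
    and "(q i)\<^sup>T * q (l - 1) = (if i = l - 1 then 1\<^sub>m (r i) else 0\<^sub>m (r i) (r (l - 1)))"
    using transpose_q_mult_q_below[OF orth] i j jl by auto
  ultimately show ?thesis using bi bl jl i by (cases "l = i + 1") auto
qed

lemma transpose_mult_q_eq_zero:
  assumes j: "1 \<le> j" and Y: "Y \<in> carrier_mat n a"
    and Y_orth: "Y\<^sup>T * ((1\<^sub>m n - P j) * qt j) = 0\<^sub>m a (dim_col (qt j))"
  shows "Y\<^sup>T * q j = 0\<^sub>m a (r j)"
proof -
  have M: "(1\<^sub>m n - P j) * qt j \<in> carrier_mat n (dim_col (qt j))"
    using minus_carrier_mat[OF P_carrier[OF j]] qt_carrier_dim_col[OF j]
    by (rule mult_carrier_mat)
  obtain C where C: "C \<in> carrier_mat (dim_col (qt j)) (r j)" and qC: "q j = (1\<^sub>m n - P j) * qt j * C"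
    by (rule col_space_subset_imp_factor[OF q_dim[OF j] M q_span[OF j, THEN equalityD1]])
  show ?thesis
    unfolding qC by (rule mult_assoc_eq_zero[OF transpose_carrier_mat[THEN iffD2, OF Y] M C Y_orth])
qed

lemma orthogonal_below_Suc:
  assumes orth: "orthogonal_below j" shows "orthogonal_below (Suc j)"
proof (cases "j = 0")
  case True
  thus ?thesis by (simp add: orthogonal_below_def)
next
  case False
  hence j: "1 \<le> j" by simp
  note qt = qt_carrier_dim_col[OF j] and Pj = P_carrier[OF j]
  have W_qj: "W\<^sup>T * q j = 0\<^sub>m m (r j)"
    using transpose_mult_complement_eq_zero[OF W Pj qt W_transpose_mult_P[OF orth j order.refl]]
    by (rule transpose_mult_q_eq_zero[OF j W])
  have qi_qj: "(q i)\<^sup>T * q j = 0\<^sub>m (r i) (r j)" if i: "1 \<le> i" "i < j" for i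
  proof -
    have qi: "q i \<in> carrier_mat n (r i)" using q_dim i by simp
    have "(q i)\<^sup>T * ((1\<^sub>m n - P j) * qt j) = 0\<^sub>m (r i) (dim_col (qt j))"
    proof (cases "i = 1 \<or> i = j - 1")
      case True
      hence "(q i)\<^sup>T * P j = (q i)\<^sup>T" using transpose_q_mult_P[OF orth i j order.refl] i by auto
      thus ?thesis by (rule transpose_mult_complement_eq_zero[OF qi Pj qt])
    next
      case False
      hence "(q i)\<^sup>T * P j = 0\<^sub>m (r i) n" using transpose_q_mult_P[OF orth i j order.refl] by auto
      hence "(q i)\<^sup>T * ((1\<^sub>m n - P j) * qt j) = (q i)\<^sup>T * qt j"
        by (rule transpose_mult_complement_eq[OF qi Pj qt])
      also have "\<dots> = 0\<^sub>m (r i) (r (j - 1))"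
        by (rule transpose_q_mult_qt_eq_zero[OF orth]) (use i False in auto)
      finally show ?thesis using qt_carrier[of j] i by auto
    qed
    thus ?thesis by (rule transpose_mult_q_eq_zero[OF j qi])
  qed
  show ?thesis unfolding orthogonal_below_def
  proof (intro allI impI)
    fix l assume "1 \<le> l" "l < Suc j"
    then consider "l < j" | "l = j" by linarith
    thus "W\<^sup>T * q l = 0\<^sub>m m (r l) \<and> (\<forall>i. 1 \<le> i \<longrightarrow> i < l \<longrightarrow> (q i)\<^sup>T * q l = 0\<^sub>m (r i) (r l))"
      by cases (use orth \<open>1 \<le> l\<close> W_qj qi_qj in \<open>auto simp: orthogonal_below_def\<close>)
  qed
qed

lemma orthogonal_below_holds: "orthogonal_below N"
proof (induction N)
  case 0
  show ?case by (simp add: orthogonal_below_def)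
next
  case (Suc N)
  thus ?case by (rule orthogonal_below_Suc)
qed

lemma W_transpose_mult_q: "1 \<le> l \<Longrightarrow> W\<^sup>T * q l = 0\<^sub>m m (r l)"
  using W_transpose_mult_q_below[OF orthogonal_below_holds] by blast

lemma transpose_q_mult_q:
  "1 \<le> i \<Longrightarrow> 1 \<le> l \<Longrightarrow> (q i)\<^sup>T * q l = (if i = l then 1\<^sub>m (r i) else 0\<^sub>m (r i) (r l))"
  using transpose_q_mult_q_below[OF orthogonal_below_holds[of "Suc (max i l)"]] by simp

lemma P2_mult:
  assumes X: "X \<in> carrier_mat n c" shows "P 2 * X = P 1 * X + q 1 * ((q 1)\<^sup>T * X)"
  unfolding P2 using add_mult_distrib_mat[OF P1_carrier _ X] q_dim[of 1] X by auto

lemma P_mult: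
  assumes j: "j \<ge> 3" and X: "X \<in> carrier_mat n c"
  shows "P j * X = P 1 * X + q 1 * ((q 1)\<^sup>T * X) + q (j - 1) * ((q (j - 1))\<^sup>T * X)"
proof -
  have "q (j - 1) \<in> carrier_mat n (r (j - 1))" using q_dim j by simp
  thus ?thesis
    unfolding Pj[OF j] using add_mult_distrib_mat[OF P2_carrier _ X] P2_mult[OF X] X by auto
qed

lemma P1_mult_qt:
  assumes j: "j \<ge> 3" shows "P 1 * qt j = P 1 * (A * q (j - 1))"
proof -
  have qj: "q (j - 2) \<in> carrier_mat n (r (j - 2))" using q_dim j by simp
  have bj: "(beta (j - 1))\<^sup>T \<in> carrier_mat (r (j - 2)) (r (j - 1))"
    using beta_dim[of "j - 1"] j by (simp add: numeral_2_eq_2)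
  have WT: "W\<^sup>T \<in> carrier_mat m n" using W by simp
  have "W\<^sup>T * (q (j - 2) * (beta (j - 1))\<^sup>T) = 0\<^sub>m m (r (j - 1))"
    by (rule mult_assoc_eq_zero[OF WT qj bj W_transpose_mult_q]) (use j in simp)
  hence "P 1 * (q (j - 2) * (beta (j - 1))\<^sup>T) = 0\<^sub>m n (r (j - 1))"
    unfolding P1 using assoc_mult_mat[OF W WT mult_carrier_mat[OF qj bj]] W by simp
  thus ?thesis
    unfolding qtj[OF j]
    using mult_minus_distrib_mat[OF P1_carrier _ mult_carrier_mat[OF qj bj]] A P1_carrier q_dim[of "j - 1"] j
    by (simp add: Suc_le_eq)
qed

lemma transpose_q_mult_qt_succ:
  assumes l: "l \<ge> 2" shows "(q l)\<^sup>T * qt (l + 1) = (q l)\<^sup>T * (A * q l)"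
proof -
  have ql: "q l \<in> carrier_mat n (r l)" and ql': "q (l - 1) \<in> carrier_mat n (r (l - 1))"
    using q_dim l by auto
  have bl: "(beta l)\<^sup>T \<in> carrier_mat (r (l - 1)) (r l)" using beta_dim l by simp
  have "(q l)\<^sup>T * (q (l - 1) * (beta l)\<^sup>T) = 0\<^sub>m (r l) (r l)"
    by (rule mult_assoc_eq_zero[OF transpose_carrier_mat[THEN iffD2, OF ql] ql' bl])
      (use transpose_q_mult_q[of l "l - 1"] l in auto)
  thus ?thesis
    using qtj[of "l + 1"] mult_minus_distrib_mat[OF transpose_carrier_mat[THEN iffD2, OF ql] _ mult_carrier_mat[OF ql' bl]]
      A ql l by simp
qed

lemma transpose_q1_mult_qt:
  assumes l: "l \<ge> 2" shows "(q 1)\<^sup>T * qt (l + 1) = beta 1 * (vk\<^sup>T * q l)"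
proof -
  have q1: "q 1 \<in> carrier_mat n (r 1)" and q2: "q 2 \<in> carrier_mat n (r 2)"
    and ql: "q l \<in> carrier_mat n (r l)" and ql': "q (l - 1) \<in> carrier_mat n (r (l - 1))"
    using q_dim l by auto
  have bl: "beta l \<in> carrier_mat (r l) (r (l - 1))" using beta_dim l by simp
  have b2: "beta 2 \<in> carrier_mat (r 2) (r 1)" using beta_dim[of 2] by simp
  have qt2: "qt 2 \<in> carrier_mat n (r 1)" using qt_carrier[of 2] by simp
  define X where "X = beta 1 * (vk\<^sup>T * q l)"
  have X: "X \<in> carrier_mat (r 1) (r l)" unfolding X_def using beta1_dim vk ql by auto
  have "(q 1)\<^sup>T * (A * q l) = ((q 1)\<^sup>T * A) * q l"
    using q1 A ql by (intro assoc_mult_mat[symmetric]) auto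
  also have "\<dots> = (qt 2 + vk * (beta 1)\<^sup>T)\<^sup>T * q l"
    using transpose_q_mult_A[of 1] A_mult_q1 by simp
  also have "\<dots> = (qt 2)\<^sup>T * q l + X"
    unfolding X_def using transpose_add[OF qt2, of "vk * (beta 1)\<^sup>T"] transpose_mult[OF vk, of "(beta 1)\<^sup>T"]
      add_mult_distrib_mat[of "(qt 2)\<^sup>T" "r 1" n "beta 1 * vk\<^sup>T" "q l"] qt2 vk beta1_dim ql by simp
  also have "(qt 2)\<^sup>T * q l = ((q l)\<^sup>T * q 2 * beta 2)\<^sup>T"
    using transpose_mult[of "(q l)\<^sup>T" "r l" n "qt 2" "r 1"] transpose_q_mult_qt[OF orthogonal_below_holds, of 2 l "Suc l"]
      ql qt2 l by simp
  finally have q1_A_ql: "(q 1)\<^sup>T * (A * q l) = ((q l)\<^sup>T * q 2 * beta 2)\<^sup>T + X" .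
  have "(q 1)\<^sup>T * qt (l + 1) = (q 1)\<^sup>T * (A * q l) - (q 1)\<^sup>T * q (l - 1) * (beta l)\<^sup>T"
    using qtj[of "l + 1"] mult_minus_distrib_mat[of "(q 1)\<^sup>T" "r 1" n "A * q l" "r l" "q (l - 1) * (beta l)\<^sup>T"]
      A q1 ql ql' bl l by simp
  (* Both correction terms equal (beta 2)^T if l = 2 and vanish otherwise. *)
  also have "\<dots> = X"
  proof (cases "l = 2")
    case True
    thus ?thesis unfolding q1_A_ql using transpose_q_mult_q q2 b2 X
      by (simp add: q_orthonormal) (intro eq_matI; auto)
  next
    case False
    thus ?thesis unfolding q1_A_ql using transpose_q_mult_q[of l 2] transpose_q_mult_q[of 1 "l - 1"]
      l q2 b2 bl X by auto
  qed
  finally show ?thesis unfolding X_def .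
qed

lemma recurrence_first:
  "q 1 * beta 1 = A * vk - vk * ak - vkm1 * bk\<^sup>T - P 1 * (A * vk - vk * ak - vkm1 * bk\<^sup>T)"
  using q_mult_beta_eq[of 1] unfolding qt1 by simp

lemma recurrence_second:
  "q 2 * beta 2 = A * q 1 - q 1 * ((q 1)\<^sup>T * (A * q 1 - vk * (beta 1)\<^sup>T))
     - vk * (beta 1)\<^sup>T - P 1 * (A * q 1 - vk * (beta 1)\<^sup>T)"
proof -
  have "qt 2 \<in> carrier_mat n (r 1)" using qt_carrier[of 2] by simp
  hence "q 2 * beta 2 = qt 2 - (P 1 * qt 2 + q 1 * ((q 1)\<^sup>T * qt 2))"
    using q_mult_beta_eq[of 2] P2_mult by simp
  also have "\<dots> = A * q 1 - q 1 * ((q 1)\<^sup>T * qt 2) - vk * (beta 1)\<^sup>T - P 1 * qt 2"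
    unfolding qt2 using A q_dim[of 1] vk beta1_dim P1_carrier by (intro eq_matI) auto
  finally show ?thesis unfolding qt2 .
qed

lemma recurrence:
  assumes j: "j \<ge> 3"
  shows "q j * beta j = A * q (j - 1) - q (j - 1) * ((q (j - 1))\<^sup>T * A * q (j - 1))
    - q (j - 2) * (beta (j - 1))\<^sup>T - (P 1 * A * q (j - 1) + q 1 * beta 1 * vk\<^sup>T * q (j - 1))"
proof -
  define l where "l = j - 1"
  have jl: "j = l + 1" "j - 1 = l" "j - 2 = l - 1" and l: "l \<ge> 2" using j by (auto simp: l_def)
  have q1: "q 1 \<in> carrier_mat n (r 1)" and ql: "q l \<in> carrier_mat n (r l)"
    and ql': "q (l - 1) \<in> carrier_mat n (r (l - 1))"
    using q_dim l by auto
  have bl: "beta l \<in> carrier_mat (r l) (r (l - 1))" using beta_dim l by simp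
  have qt: "qt j \<in> carrier_mat n (r l)" using qt_carrier[of j] j jl by simp
  have "P j * qt j = P 1 * (A * q l) + q 1 * (beta 1 * (vk\<^sup>T * q l)) + q l * ((q l)\<^sup>T * (A * q l))"
    using P_mult[OF j qt] P1_mult_qt[OF j] transpose_q1_mult_qt[OF l] transpose_q_mult_qt_succ[OF l] jl
    by simp
  hence "q j * beta j = (A * q l - q (l - 1) * (beta l)\<^sup>T)
      - (P 1 * (A * q l) + q 1 * (beta 1 * (vk\<^sup>T * q l)) + q l * ((q l)\<^sup>T * (A * q l)))"
    using q_mult_beta_eq[of j] qtj[OF j] j jl by simp
  also have "\<dots> = A * q l - q l * ((q l)\<^sup>T * (A * q l)) - q (l - 1) * (beta l)\<^sup>T
      - (P 1 * (A * q l) + q 1 * (beta 1 * (vk\<^sup>T * q l)))"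
    using A q1 ql ql' bl beta1_dim vk P1_carrier by (intro eq_matI) auto
  also have "(q l)\<^sup>T * (A * q l) = (q l)\<^sup>T * A * q l"
    using A ql by (intro assoc_mult_mat[symmetric]) auto
  also have "P 1 * (A * q l) = P 1 * A * q l"
    using A P1_carrier ql by (intro assoc_mult_mat[symmetric]) auto
  also have "q 1 * (beta 1 * (vk\<^sup>T * q l)) = q 1 * beta 1 * vk\<^sup>T * q l"
  proof -
    have vkT: "vk\<^sup>T \<in> carrier_mat p n" using vk by simp
    show ?thesis
      by (simp only: assoc_mult_mat[OF mult_carrier_mat[OF q1 beta1_dim] vkT ql]
          assoc_mult_mat[OF q1 beta1_dim mult_carrier_mat[OF vkT ql]])
  qed
  finally show ?thesis by (simp only: jl(2,3))
qed

end

theorem theorem4: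
  fixes A W vk vkm1 ak bk :: "real mat"
    and n m p :: nat
    and q qt beta P :: "nat \<Rightarrow> real mat"
    and r :: "nat \<Rightarrow> nat"
  assumes A: "A \<in> carrier_mat n n" and A_sym: "A\<^sup>T = A"
    and W: "W \<in> carrier_mat n m" and W_orth: "W\<^sup>T * W = 1\<^sub>m m"
    and vk: "vk \<in> carrier_mat n p" and vkm1: "vkm1 \<in> carrier_mat n p"
    and ak: "ak \<in> carrier_mat p p" and bk: "bk \<in> carrier_mat p p"
    and q_dim: "\<And>j. j \<ge> 1 \<Longrightarrow> q j \<in> carrier_mat n (r j)"
    and beta1_dim: "beta 1 \<in> carrier_mat (r 1) p"
    and beta_dim: "\<And>j. j \<ge> 2 \<Longrightarrow> beta j \<in> carrier_mat (r j) (r (j - 1))"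
    and qt1: "qt 1 = A * vk - vk * ak - vkm1 * bk\<^sup>T"
    and qt2: "qt 2 = A * q 1 - vk * (beta 1)\<^sup>T"
    and qtj: "\<And>j. j \<ge> 3 \<Longrightarrow> qt j = A * q (j - 1) - q (j - 2) * (beta (j - 1))\<^sup>T"
    and P1: "P 1 = W * W\<^sup>T"
    and P2: "P 2 = P 1 + q 1 * (q 1)\<^sup>T"
    and Pj: "\<And>j. j \<ge> 3 \<Longrightarrow> P j = P 2 + q (j - 1) * (q (j - 1))\<^sup>T"
    and step: "\<And>j. j \<ge> 1 \<Longrightarrow> q j * beta j = (1\<^sub>m n - P j) * qt j"
    and q_orthonormal: "\<And>j. j \<ge> 1 \<Longrightarrow> (q j)\<^sup>T * q j = 1\<^sub>m (r j)"
    and q_span: "\<And>j. j \<ge> 1 \<Longrightarrow> colspace n (q j) = colspace n ((1\<^sub>m n - P j) * qt j)"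
    and beta_full_row_rank: "\<And>j. j \<ge> 1 \<Longrightarrow> mrank (beta j) = r j"
  shows "(q 1 * beta 1 = A * vk - vk * ak - vkm1 * bk\<^sup>T
            - P 1 * (A * vk - vk * ak - vkm1 * bk\<^sup>T))
      \<and> (q 2 * beta 2 = A * q 1 - q 1 * ((q 1)\<^sup>T * (A * q 1 - vk * (beta 1)\<^sup>T))
            - vk * (beta 1)\<^sup>T - P 1 * (A * q 1 - vk * (beta 1)\<^sup>T))
      \<and> (\<forall>j\<ge>3.
          q j * beta j = A * q (j - 1) - q (j - 1) * ((q (j - 1))\<^sup>T * A * q (j - 1))
            - q (j - 2) * (beta (j - 1))\<^sup>T
            - (P 1 * A * q (j - 1) + q 1 * beta 1 * vk\<^sup>T * q (j - 1)))"
proof -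
  interpret block_lanczos_continuation A W vk vkm1 ak bk n m p q qt beta P r
    by unfold_locales (fact assms)+
  show ?thesis using recurrence_first recurrence_second recurrence by blast
qed

end
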